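(* Let $0\le k,l\le N$ be integers and $a,b,c,d,q$ generic. Then $$R_k^l(a,b,c,d;N;q)=\sum_{P}\ \prod_{\text{early right}}\frac{(1-q^{x+2y}ad)(1-q^{x}a/d)}{(1-q^{x+y}cd)(1-q^{x-y}c/d)}\prod_{\text{early up}}\frac{(1-q^{2x+y}ac)(1-q^{y}a/c)}{(1-q^{x+y}cd)(1-q^{y-x}d/c)}$$ $$\times\prod_{\text{late right}}\frac{(1-q^{x+2y-k}bd)(1-q^{x-k}b/d)}{(1-q^{x+y}cd)(1-q^{x-y}c/d)}\prod_{\text{late up}}\frac{(1-q^{2x+y-k}bc)(1-q^{y-k}b/c)}{(1-q^{x+y}cd)(1-q^{y-x}d/c)},$$ where the sum is over all lattice paths $P$ from $(0,0)$ to $(l,N-l)$ with unit steps right $(1,0)$ or up $(0,1)$; the products run over the steps of $P$, the first $k$ steps being called "early" and the remaining $N-k$ "late"; and in each factor $(x,y)$ is the starting point of the corresponding step.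
   Context: $h_k(x;a)=\prod_{j=0}^{k-1}(1-axq^j+a^2q^{2j})$. For generic parameters, $R_k^l(a,b,c,d;N;q)$ are the unique coefficients with $h_k(x;a)h_{N-k}(x;b)=\sum_{l=0}^N R_k^l(a,b,c,d;N;q)\,h_l(x;c)h_{N-l}(x;d)$ as polynomials in $x$. *)

theory Defs
  imports "HOL-Computational_Algebra.Polynomial" Complex_Main
begin

definition hpoly :: "nat \<Rightarrow> complex \<Rightarrow> complex \<Rightarrow> complex poly" where
  "hpoly k a q = (\<Prod>j<k. [: 1 + a^2 * q^(2*j), - a * q^j :])"

definition Rbasis :: "complex \<Rightarrow> complex \<Rightarrow> nat \<Rightarrow> complex \<Rightarrow> nat \<Rightarrow> complex poly" where
  "Rbasis c d N q l = hpoly l c q * hpoly (N - l) d q"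

text \<open>The coefficient vector (indexed by l in {0..N}, zero elsewhere) of the expansion of
  h_k(x;a) h_{N-k}(x;b) in the basis above; meaningful when these coefficients are unique.\<close>
definition Rcoeffs :: "complex \<Rightarrow> complex \<Rightarrow> complex \<Rightarrow> complex \<Rightarrow> nat \<Rightarrow> complex \<Rightarrow> nat \<Rightarrow> (nat \<Rightarrow> complex)" where
  "Rcoeffs a b c d N q k = (THE r. (\<forall>l>N. r l = 0) \<and>
      hpoly k a q * hpoly (N - k) b q = (\<Sum>l\<le>N. smult (r l) (Rbasis c d N q l)))"

definition R :: "nat \<Rightarrow> nat \<Rightarrow> complex \<Rightarrow> complex \<Rightarrow> complex \<Rightarrow> complex \<Rightarrow> nat \<Rightarrow> complex \<Rightarrow> complex" where
  "R k l a b c d N q = Rcoeffs a b c d N q k l"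

text \<open>Lattice paths from (0,0) to (l, N-l): lists of N steps, True = right (1,0), False = up (0,1).\<close>
definition paths :: "nat \<Rightarrow> nat \<Rightarrow> bool list set" where
  "paths N l = {P. length P = N \<and> length (filter id P) = l}"

definition sx :: "bool list \<Rightarrow> nat \<Rightarrow> int" where
  "sx P i = int (length (filter id (take i P)))"
definition sy :: "bool list \<Rightarrow> nat \<Rightarrow> int" where
  "sy P i = int i - sx P i"

definition step_wt :: "complex \<Rightarrow> complex \<Rightarrow> complex \<Rightarrow> complex \<Rightarrow> complex \<Rightarrow> nat \<Rightarrow> bool \<Rightarrow> bool \<Rightarrow> int \<Rightarrow> int \<Rightarrow> complex" where
  "step_wt a b c d q k early right x y =
    (if early then
       (if right then
          ((1 - q powi (x + 2*y) * a * d) * (1 - q powi x * a / d)) /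
          ((1 - q powi (x + y) * c * d) * (1 - q powi (x - y) * c / d))
        else
          ((1 - q powi (2*x + y) * a * c) * (1 - q powi y * a / c)) /
          ((1 - q powi (x + y) * c * d) * (1 - q powi (y - x) * d / c)))
     else
       (if right then
          ((1 - q powi (x + 2*y - int k) * b * d) * (1 - q powi (x - int k) * b / d)) /
          ((1 - q powi (x + y) * c * d) * (1 - q powi (x - y) * c / d))
        else
          ((1 - q powi (2*x + y - int k) * b * c) * (1 - q powi (y - int k) * b / c)) /
          ((1 - q powi (x + y) * c * d) * (1 - q powi (y - x) * d / c))))"

definition path_wt :: "complex \<Rightarrow> complex \<Rightarrow> complex \<Rightarrow> complex \<Rightarrow> complex \<Rightarrow> nat \<Rightarrow> bool list \<Rightarrow> complex" where
  "path_wt a b c d q k P =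
     (\<Prod>i<length P. step_wt a b c d q k (i < k) (P ! i) (sx P i) (sy P i))"

end

theory Submission
  imports Defs
begin

text \<open>Every factor of \<open>h\<^sub>k(x;a) h\<^sub>N\<^sub>-\<^sub>k(x;b)\<close> has the form \<open>1 - e x + e\<^sup>2\<close>, and
  such a linear polynomial is a unique combination of \<open>1 - u x + u\<^sup>2\<close> and \<open>1 - v x + v\<^sup>2\<close>;
  the coefficients are obtained by evaluating at the roots \<open>x = v + 1/v\<close> and \<open>x = u + 1/u\<close>.
  With \<open>u = c q\<^sup>x\<close>, \<open>v = d q\<^sup>y\<close> this turns \<open>h\<^sub>x(c) h\<^sub>y(d)\<close> times the next factor into a
  combination of \<open>h\<^sub>x\<^sub>+\<^sub>1(c) h\<^sub>y(d)\<close> (a right step) and \<open>h\<^sub>x(c) h\<^sub>y\<^sub>+\<^sub>1(d)\<close> (an up step),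
  whose coefficients are exactly the step weights. Multiplying in the \<open>N\<close> factors one at a time
  expands the product as a sum over lattice paths, and grouping the paths by their endpoint gives
  the coefficients, which are unique by hypothesis.\<close>

definition lin_factor :: "'a::comm_ring_1 \<Rightarrow> 'a poly" where
  "lin_factor e = [:1 + e^2, -e:]"

definition interp_coeff :: "'a::field \<Rightarrow> 'a \<Rightarrow> 'a \<Rightarrow> 'a" where
  "interp_coeff e u v = (1 - e*v) * (1 - e/v) / ((1 - u*v) * (1 - u/v))"

lemma interp_coeff_cleared:
  "v \<noteq> 0 \<Longrightarrow> interp_coeff e u v = (1 - e*v) * (v - e) / ((1 - u*v) * (v - u))"
  unfolding interp_coeff_def by (simp add: diff_divide_distrib[symmetric] divide_simps)

lemma lin_factor_interpolation:
  fixes e u v :: "'a::field"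
  assumes "u \<noteq> 0" "v \<noteq> 0" "u * v \<noteq> 1" "u \<noteq> v"
  shows "lin_factor e = smult (interp_coeff e u v) (lin_factor u) + smult (interp_coeff e v u) (lin_factor v)"
proof -
  define D where "D = (1 - u*v) * (v - u)"
  have "D \<noteq> 0" using assms by (simp add: D_def)
  have "(1 - e*u) * (u - e) / ((1 - v*u) * (u - v)) = (- ((1 - e*u) * (e - u))) / (- D)"
    unfolding D_def by (simp add: algebra_simps)
  then have coeffs: "interp_coeff e u v = (1 - e*v) * (v - e) / D"
    "interp_coeff e v u = (1 - e*u) * (e - u) / D"
    unfolding interp_coeff_cleared[OF assms(1)] interp_coeff_cleared[OF assms(2)]
    by (simp_all add: D_def)
  have "(1 - e*v) * (v - e) * (1 + u^2) + (1 - e*u) * (e - u) * (1 + v^2) = (1 + e^2) * D"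
    "(1 - e*v) * (v - e) * u + (1 - e*u) * (e - u) * v = e * D"
    unfolding D_def by algebra+
  with \<open>D \<noteq> 0\<close> have "interp_coeff e u v * (1 + u^2) + interp_coeff e v u * (1 + v^2) = 1 + e^2"
    "interp_coeff e u v * u + interp_coeff e v u * v = e"
    unfolding coeffs by (simp_all add: times_divide_eq_left flip: add_divide_distrib)
  then show ?thesis unfolding lin_factor_def by (simp add: algebra_simps)
qed

lemma hpoly_eq_prod_lin_factor: "hpoly m a q = (\<Prod>j<m. lin_factor (a * q^j))"
  unfolding hpoly_def lin_factor_def by (simp add: power_mult_distrib power_mult mult.commute)

lemma hpoly_Suc: "hpoly (Suc m) a q = hpoly m a q * lin_factor (a * q^m)"
  by (simp add: hpoly_eq_prod_lin_factor)

definition hparam :: "'a::comm_ring_1 \<Rightarrow> 'a \<Rightarrow> 'a \<Rightarrow> nat \<Rightarrow> nat \<Rightarrow> 'a" where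
  "hparam a b q k n = (if n < k then a * q^n else b * q^(n - k))"

lemma hpoly_mult_hpoly_eq_prod_lin_factor:
  assumes "k \<le> N"
  shows "hpoly k a q * hpoly (N - k) b q = (\<Prod>i<N. lin_factor (hparam a b q k i))"
proof -
  have "(\<Prod>i<N. f i) = (\<Prod>i<k. f i) * (\<Prod>j<N - k. f (k + j))" for f :: "nat \<Rightarrow> complex poly"
    using prod.atLeastLessThan_concat[of 0 k N f] prod.atLeastLessThan_shift_0[of f k N] assms
    by (simp add: atLeast0LessThan o_def)
  then show ?thesis
    using assms unfolding hparam_def hpoly_eq_prod_lin_factor by (auto intro!: prod.cong)
qed

lemma hparam_eq_powi:
  fixes a b q :: "'a::field"
  assumes "q \<noteq> 0"
  shows "hparam a b q k n = (if n < k then a else b * q powi - int k) * q powi int n"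
proof (cases "n < k")
  case False
  then have "q powi int n = q powi int k * q^(n - k)"
    using assms by (simp flip: power_add)
  then show ?thesis
    using False assms by (simp add: hparam_def power_int_minus field_simps)
qed (simp add: hparam_def)

lemma powi_step_denominators:
  fixes c d q :: "'a::field" and x y :: int
  assumes "q \<noteq> 0"
  shows "q powi (x + y) * c * d = (c * q powi x) * (d * q powi y)"
    and "q powi (x - y) * c / d = (c * q powi x) / (d * q powi y)"
    and "q powi (y - x) * d / c = (d * q powi y) / (c * q powi x)"
  using assms by (simp_all add: power_int_add power_int_diff mult.commute)

lemma step_wt_early_eq_interp_coeff:
  fixes a b c d q :: complex and x y :: int
  assumes "q \<noteq> 0"
  defines "e \<equiv> a * q powi (x + y)" and "u \<equiv> c * q powi x" and "v \<equiv> d * q powi y"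
  shows "step_wt a b c d q k True True x y = interp_coeff e u v"
    and "step_wt a b c d q k True False x y = interp_coeff e v u"
proof -
  have "q powi (x + 2*y) = q powi ((x + y) + y)" "q powi (2*x + y) = q powi ((x + y) + x)"
    by (rule arg_cong[of _ _ "power_int q"], simp)+
  then have "q powi (x + 2*y) * a * d = e * v" "q powi (2*x + y) * a * c = e * u"
    unfolding e_def u_def v_def power_int_add[OF disjI1, OF assms(1)] by (simp_all add: mult_ac)
  moreover have "q powi x * a / d = e / v" "q powi y * a / c = e / u"
    using assms(1) by (simp_all add: e_def u_def v_def power_int_add)
  moreover have "q powi (x + y) * c * d = u * v" "q powi (x + y) * c * d = v * u"
    "q powi (x - y) * c / d = u / v" "q powi (y - x) * d / c = v / u"
    unfolding u_def v_def powi_step_denominators[OF assms(1)] by (simp_all add: mult.commute)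
  ultimately show "step_wt a b c d q k True True x y = interp_coeff e u v"
    and "step_wt a b c d q k True False x y = interp_coeff e v u"
    by (simp_all only: step_wt_def interp_coeff_def if_True if_False)
qed

lemma step_wt_late_eq_early:
  fixes a b c d q :: complex and x y :: int
  assumes "q \<noteq> 0"
  shows "step_wt a b c d q k False right x y = step_wt (b * q powi - int k) b c d q k True right x y"
proof -
  have "q powi (m - int k) = q powi m * q powi - int k" for m
    using assms by (simp add: power_int_diff power_int_minus field_simps)
  then show ?thesis unfolding step_wt_def by (simp add: mult_ac)
qed

lemma step_wt_eq_interp_coeff:
  fixes a b c d q :: complex and k :: nat and early :: bool and x y :: int
  assumes "q \<noteq> 0"
  defines "e \<equiv> (if early then a else b * q powi - int k) * q powi (x + y)"
    and "u \<equiv> c * q powi x" and "v \<equiv> d * q powi y"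
  shows "step_wt a b c d q k early True x y = interp_coeff e u v"
    and "step_wt a b c d q k early False x y = interp_coeff e v u"
proof -
  have "step_wt a b c d q k early right x y
      = step_wt (if early then a else b * q powi - int k) b c d q k True right x y" for right
    using step_wt_late_eq_early[OF assms(1)] by (cases early) simp_all
  then show "step_wt a b c d q k early True x y = interp_coeff e u v"
    and "step_wt a b c d q k early False x y = interp_coeff e v u"
    unfolding e_def u_def v_def by (simp_all add: step_wt_early_eq_interp_coeff[OF assms(1)])
qed

lemma lin_factor_mult_Rbasis:
  fixes a b c d q :: complex and k n x :: nat
  assumes "q \<noteq> 0" "c \<noteq> 0" "d \<noteq> 0" "x \<le> n"
    and "1 - q powi (int x + int (n - x)) * c * d \<noteq> 0"
    and "1 - q powi (int x - int (n - x)) * c / d \<noteq> 0"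
    and "1 - q powi (int (n - x) - int x) * d / c \<noteq> 0"
  shows "lin_factor (hparam a b q k n) * Rbasis c d n q x =
      smult (step_wt a b c d q k (n < k) True (int x) (int (n - x))) (Rbasis c d (Suc n) q (Suc x))
    + smult (step_wt a b c d q k (n < k) False (int x) (int (n - x))) (Rbasis c d (Suc n) q x)"
proof -
  define y where "y = n - x"
  define u v where "u = c * q^x" and "v = d * q^y"
  have n: "n = x + y" "Suc n - x = Suc y" using assms(4) by (simp_all add: y_def)
  have "u \<noteq> 0" "v \<noteq> 0" using assms(1-3) by (simp_all add: u_def v_def)
  moreover have "1 - u * v \<noteq> 0" "1 - u / v \<noteq> 0"
    using assms(5,6) unfolding powi_step_denominators[OF assms(1)] by (simp_all add: u_def v_def y_def)
  ultimately have "lin_factor (hparam a b q k n) =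
      smult (interp_coeff (hparam a b q k n) u v) (lin_factor u)
    + smult (interp_coeff (hparam a b q k n) v u) (lin_factor v)"
    by (intro lin_factor_interpolation) auto
  moreover have "step_wt a b c d q k (n < k) True (int x) (int y) = interp_coeff (hparam a b q k n) u v"
    "step_wt a b c d q k (n < k) False (int x) (int y) = interp_coeff (hparam a b q k n) v u"
    using step_wt_eq_interp_coeff[OF assms(1), where early = "n < k" and x = "int x" and y = "int y"]
    by (simp_all add: hparam_eq_powi[OF assms(1)] n u_def v_def)
  ultimately have "lin_factor (hparam a b q k n) =
      smult (step_wt a b c d q k (n < k) True (int x) (int y)) (lin_factor u)
    + smult (step_wt a b c d q k (n < k) False (int x) (int y)) (lin_factor v)"
    by simp
  then show ?thesis
    unfolding Rbasis_def n(2) unfolding n(1) hpoly_Suc u_def v_def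
    by (simp add: algebra_simps flip: y_def)
qed

lemma path_wt_snoc:
  "path_wt a b c d q k (P @ [s]) = path_wt a b c d q k P *
     step_wt a b c d q k (length P < k) s
       (int (length (filter id P))) (int (length P - length (filter id P)))"
proof -
  have "sx (P @ [s]) i = sx P i" "sy (P @ [s]) i = sy P i" if "i \<le> length P" for i
    using that by (simp_all add: sx_def sy_def)
  moreover have "sx P (length P) = int (length (filter id P))"
    "sy P (length P) = int (length P - length (filter id P))"
    by (simp_all add: sx_def sy_def of_nat_diff length_filter_le)
  ultimately show ?thesis
    unfolding path_wt_def by (auto simp: nth_append intro!: prod.cong)
qed

lemma sum_lists_length_Suc:
  fixes f :: "'a::finite list \<Rightarrow> 'b::comm_monoid_add"
  shows "(\<Sum>xs | length xs = Suc n. f xs) = (\<Sum>xs | length xs = n. \<Sum>y\<in>UNIV. f (xs @ [y]))"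
proof -
  have "{xs::'a list. length xs = Suc n} = (\<lambda>(xs, y). xs @ [y]) ` ({xs. length xs = n} \<times> UNIV)"
    by (auto simp: length_Suc_conv_rev)
  moreover have "inj_on (\<lambda>(xs, y). xs @ [y]) ({xs::'a list. length xs = n} \<times> UNIV)"
    by (auto simp: inj_on_def)
  ultimately show ?thesis
    by (simp add: sum.reindex sum.cartesian_product finite_list_length prod.case_distrib)
qed

lemma prod_lin_factor_eq_path_sum:
  fixes a b c d q :: complex and N k n :: nat
  assumes "q \<noteq> 0" "c \<noteq> 0" "d \<noteq> 0"
    and denoms: "\<And>x y :: int. 0 \<le> x \<Longrightarrow> 0 \<le> y \<Longrightarrow> x + y < int N \<Longrightarrow>
        (1 - q powi (x + y) * c * d) \<noteq> 0 \<and> (1 - q powi (x - y) * c / d) \<noteq> 0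
        \<and> (1 - q powi (y - x) * d / c) \<noteq> 0"
    and "n \<le> N"
  shows "(\<Prod>i<n. lin_factor (hparam a b q k i)) =
    (\<Sum>P | length P = n. smult (path_wt a b c d q k P) (Rbasis c d n q (length (filter id P))))"
  using \<open>n \<le> N\<close>
proof (induction n)
  case 0
  then show ?case by (simp add: path_wt_def Rbasis_def hpoly_def)
next
  case (Suc n)
  have step: "smult (path_wt a b c d q k P) (Rbasis c d n q (length (filter id P))) * lin_factor (hparam a b q k n)
      = (\<Sum>s\<in>UNIV. smult (path_wt a b c d q k (P @ [s])) (Rbasis c d (Suc n) q (length (filter id (P @ [s])))))"
    if "length P = n" for P
  proof -
    define x where "x = length (filter id P)"
    have "x \<le> n" using that length_filter_le[of id P] by (simp add: x_def)
    then have "int x + int (n - x) < int N" using Suc.prems by simp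
    then have "lin_factor (hparam a b q k n) * Rbasis c d n q x =
        smult (step_wt a b c d q k (n < k) True (int x) (int (n - x))) (Rbasis c d (Suc n) q (Suc x))
      + smult (step_wt a b c d q k (n < k) False (int x) (int (n - x))) (Rbasis c d (Suc n) q x)"
      using denoms[of "int x" "int (n - x)"] by (intro lin_factor_mult_Rbasis) (simp_all add: assms \<open>x \<le> n\<close>)
    then show ?thesis
      using that by (simp add: UNIV_bool path_wt_snoc x_def mult.commute smult_add_right)
  qed
  have "(\<Prod>i<Suc n. lin_factor (hparam a b q k i))
      = (\<Sum>P | length P = n. smult (path_wt a b c d q k P) (Rbasis c d n q (length (filter id P)))
          * lin_factor (hparam a b q k n))"
    using Suc by (simp only: prod.lessThan_Suc sum_distrib_right Suc_leD)
  also have "\<dots> = (\<Sum>P | length P = n. \<Sum>s\<in>UNIV.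
      smult (path_wt a b c d q k (P @ [s])) (Rbasis c d (Suc n) q (length (filter id (P @ [s])))))"
    using step by simp
  also have "\<dots> = (\<Sum>P | length P = Suc n.
      smult (path_wt a b c d q k P) (Rbasis c d (Suc n) q (length (filter id P))))"
    by (rule sum_lists_length_Suc[symmetric])
  finally show ?case .
qed

lemma hpoly_mult_hpoly_path_expansion:
  fixes a b c d q :: complex and N k :: nat
  assumes "k \<le> N" "q \<noteq> 0" "c \<noteq> 0" "d \<noteq> 0"
    and denoms: "\<And>x y :: int. 0 \<le> x \<Longrightarrow> 0 \<le> y \<Longrightarrow> x + y < int N \<Longrightarrow>
        (1 - q powi (x + y) * c * d) \<noteq> 0 \<and> (1 - q powi (x - y) * c / d) \<noteq> 0
        \<and> (1 - q powi (y - x) * d / c) \<noteq> 0"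
  shows "hpoly k a q * hpoly (N - k) b q =
    (\<Sum>l\<le>N. smult (\<Sum>P\<in>paths N l. path_wt a b c d q k P) (Rbasis c d N q l))"
proof -
  have "hpoly k a q * hpoly (N - k) b q =
      (\<Sum>P | length P = N. smult (path_wt a b c d q k P) (Rbasis c d N q (length (filter id P))))"
    unfolding hpoly_mult_hpoly_eq_prod_lin_factor[OF assms(1)]
    by (rule prod_lin_factor_eq_path_sum[OF assms(2-4) denoms order.refl])
  also have "\<dots> = (\<Sum>l\<le>N. \<Sum>P\<in>paths N l. smult (path_wt a b c d q k P) (Rbasis c d N q l))"
    by (subst sum.group[symmetric, where g = "\<lambda>P. length (filter id P)" and T = "{..N}"])
      (auto simp: paths_def finite_list_length length_filter_le intro!: sum.cong)
  finally show ?thesis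
    by (simp add: smult_sum)
qed

lemma Rcoeffs_eqI:
  assumes indep: "\<And>r. (\<Sum>j\<le>N. smult (r j) (Rbasis c d N q j)) = 0 \<Longrightarrow> \<forall>j\<le>N. r j = 0"
    and "\<forall>l>N. r l = 0"
    and "hpoly k a q * hpoly (N - k) b q = (\<Sum>l\<le>N. smult (r l) (Rbasis c d N q l))"
  shows "Rcoeffs a b c d N q k = r"
  unfolding Rcoeffs_def
proof (rule the_equality)
  fix r' assume r': "(\<forall>l>N. r' l = 0) \<and>
    hpoly k a q * hpoly (N - k) b q = (\<Sum>l\<le>N. smult (r' l) (Rbasis c d N q l))"
  then have "(\<Sum>j\<le>N. smult (r' j - r j) (Rbasis c d N q j)) = 0"
    using assms(3) by (simp add: smult_diff_left sum_subtractf)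
  then have "\<forall>j\<le>N. r' j - r j = 0" by (rule indep)
  with r' assms(2) show "r' = r"
    by (metis eq_iff_diff_eq_0 not_le ext)
qed (use assms(2,3) in simp)

lemma paths_eq_empty: "N < l \<Longrightarrow> paths N l = {}"
  unfolding paths_def using length_filter_le[of id] by (auto simp: not_less[symmetric])

theorem mainTheorem10:
  fixes a b c d q :: complex and N k l :: nat
  assumes "k \<le> N" and "l \<le> N"
    and "q \<noteq> 0" and "c \<noteq> 0" and "d \<noteq> 0"
    and indep: "\<And>r. (\<Sum>j\<le>N. smult (r j) (Rbasis c d N q j)) = 0 \<Longrightarrow> \<forall>j\<le>N. r j = 0"
    and denoms: "\<And>x y :: int. 0 \<le> x \<Longrightarrow> 0 \<le> y \<Longrightarrow> x + y < int N \<Longrightarrow>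
        (1 - q powi (x + y) * c * d) \<noteq> 0 \<and> (1 - q powi (x - y) * c / d) \<noteq> 0
        \<and> (1 - q powi (y - x) * d / c) \<noteq> 0"
  shows "R k l a b c d N q = (\<Sum>P\<in>paths N l. path_wt a b c d q k P)"
proof -
  have "hpoly k a q * hpoly (N - k) b q =
      (\<Sum>l\<le>N. smult (\<Sum>P\<in>paths N l. path_wt a b c d q k P) (Rbasis c d N q l))"
    using assms(1,3-5) denoms by (rule hpoly_mult_hpoly_path_expansion)
  then have "Rcoeffs a b c d N q k = (\<lambda>l. \<Sum>P\<in>paths N l. path_wt a b c d q k P)"
    by (intro Rcoeffs_eqI[OF indep]) (simp_all add: paths_eq_empty)
  then show ?thesis
    unfolding R_def by simp
qed

end
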